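(* Suppose $(P,n,a,b)$ is good. Let $m$ be the minimal integer $m\ge n+1$ such that $Q(x)=P(x)-x^m$ satisfies $Q(x)>0$ for all $x\in[a,b]$. Then $(Q,m,a,b)$ is good.
   Context: Let $\mathcal{B}_n$ be the set of polynomials $1+\sum_{k=1}^n a_kx^k$ with $a_k\in\{-1,0,1\}$. A quadruple $(P,n,a,b)$ is called good if $P\in\mathcal{B}_n$, $0.5<a<b<1$, $P(a)>a^{n+1}/(1-a)$, $P(b)>b^{n+1}/(1-b)$, $P(x)>0$ for all $x\in[a,b]$, and there exists $x\in(a,b)$ with $P(x)<x^{n+1}/(1-x)$. *)

theory Defs
  imports "HOL-Computational_Algebra.Polynomial" Complex_Main
begin

definition B :: "nat \<Rightarrow> real poly set" where
  "B n = {P. coeff P 0 = 1 \<and> (\<forall>k\<in>{1..n}. coeff P k \<in> {-1, 0, 1}) \<and> (\<forall>k>n. coeff P k = 0)}"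

definition good :: "real poly \<Rightarrow> nat \<Rightarrow> real \<Rightarrow> real \<Rightarrow> bool" where
  "good P n a b \<longleftrightarrow>
     P \<in> B n \<and> 1/2 < a \<and> a < b \<and> b < 1 \<and>
     poly P a > a ^ (n+1) / (1 - a) \<and>
     poly P b > b ^ (n+1) / (1 - b) \<and>
     (\<forall>x\<in>{a..b}. poly P x > 0) \<and>
     (\<exists>x\<in>{a<..<b}. poly P x < x ^ (n+1) / (1 - x))"

end

theory Submission
  imports Defs
begin

text \<open>
  The thresholds are linked by the geometric tail identity
  \<open>x^k/(1-x) = x^k + x^(k+1)/(1-x)\<close>. Hence subtracting \<open>x^m\<close> with \<open>m > n\<close>
  keeps a value above the new threshold \<open>x^(m+1)/(1-x)\<close> wherever it was above
  \<open>x^(n+1)/(1-x)\<close>, which settles the endpoints; for \<open>m = n + 1\<close> the identity also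
  moves the old interior witness below the new threshold. For \<open>m > n + 1\<close>,
  minimality of \<open>m\<close> yields \<open>y \<in> [a,b]\<close> with \<open>P(y) \<le> y^(m-1)\<close>, and then
  \<open>P(y) - y^m \<le> y^(m-1)(1-y) < y^(m+1)/(1-y)\<close> because \<open>y > 1/2\<close>; by the
  endpoint inequalities, \<open>y\<close> lies strictly inside.
\<close>

lemma geometric_tail_split:
  fixes x :: real
  assumes "x \<noteq> 1"
  shows "x ^ k / (1 - x) = x ^ k + x ^ (k + 1) / (1 - x)"
  using assms by (simp add: field_simps)

lemma above_tail_minus_power:
  fixes x p :: real
  assumes "0 < x" "x < 1" "n < m" "x ^ (n + 1) / (1 - x) < p"
  shows "x ^ (m + 1) / (1 - x) < p - x ^ m"
proof -
  have "x ^ m / (1 - x) \<le> x ^ (n + 1) / (1 - x)"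
    using assms by (intro divide_right_mono power_decreasing) auto
  moreover have "x ^ m / (1 - x) = x ^ m + x ^ (m + 1) / (1 - x)"
    using assms(2) by (intro geometric_tail_split) simp
  ultimately show ?thesis
    using assms(4) by linarith
qed

lemma below_tail_minus_power:
  fixes y p :: real
  assumes "1/2 < y" "y < 1" "p \<le> y ^ k"
  shows "p - y ^ (k + 1) < y ^ (k + 2) / (1 - y)"
proof -
  have "(1 - y) * (1 - y) < y * y"
    using assms(1,2) by (simp add: algebra_simps)
  then have "y ^ k * (1 - y) * (1 - y) < y ^ (k + 2)"
    using assms(1) by (simp add: power_add mult.assoc)
  then have "y ^ k * (1 - y) < y ^ (k + 2) / (1 - y)"
    using assms(2) by (simp add: pos_less_divide_eq)
  then show ?thesis
    using assms(3) by (simp add: algebra_simps)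
qed

lemma minus_monom_in_B:
  assumes "P \<in> B n" "n < m"
  shows "P - monom 1 m \<in> B m"
  using assms unfolding B_def by (auto simp: coeff_monom)

lemma good_endpoints_minus_power:
  fixes P :: "real poly"
  assumes good: "good P n a b" and "n < m"
  shows "a ^ (m + 1) / (1 - a) < poly P a - a ^ m"
    and "b ^ (m + 1) / (1 - b) < poly P b - b ^ m"
proof -
  from good have "0 < a" "a < 1" "0 < b" "b < 1"
      "a ^ (n + 1) / (1 - a) < poly P a" "b ^ (n + 1) / (1 - b) < poly P b"
    unfolding good_def by auto
  then show "a ^ (m + 1) / (1 - a) < poly P a - a ^ m"
    and "b ^ (m + 1) / (1 - b) < poly P b - b ^ m"
    using above_tail_minus_power \<open>n < m\<close> by blast+
qed

lemma good_crossing_minus_power: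
  fixes P :: "real poly"
  assumes good: "good P n a b" and "n < m"
    and minimal: "\<forall>m'. n + 1 \<le> m' \<and> m' < m \<longrightarrow> \<not> (\<forall>x\<in>{a..b}. poly P x - x ^ m' > 0)"
  shows "\<exists>x\<in>{a<..<b}. poly P x - x ^ m < x ^ (m + 1) / (1 - x)"
proof (cases "m = n + 1")
  case True
  from good obtain x where x: "x \<in> {a<..<b}" "poly P x < x ^ (n + 1) / (1 - x)"
    unfolding good_def by blast
  have "x < 1" using x good unfolding good_def by auto
  then have "x ^ m / (1 - x) = x ^ m + x ^ (m + 1) / (1 - x)"
    by (intro geometric_tail_split) simp
  then have "poly P x - x ^ m < x ^ (m + 1) / (1 - x)"
    using x(2) True by simp
  with x(1) show ?thesis by blast
next
  case False
  define k where "k = m - 1"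
  have m: "m = k + 1" "n + 1 \<le> k" "k < m"
    using False \<open>n < m\<close> unfolding k_def by auto
  then obtain y where y: "y \<in> {a..b}" "poly P y \<le> y ^ k"
    using minimal by (auto simp: not_less)
  have "1/2 < y" "y < 1" using y(1) good unfolding good_def by auto
  from below_tail_minus_power[OF this y(2)]
  have below: "poly P y - y ^ m < y ^ (m + 1) / (1 - y)"
    by (simp add: m(1))
  with good_endpoints_minus_power[OF good \<open>n < m\<close>] have "y \<noteq> a" "y \<noteq> b" by auto
  with y(1) below show ?thesis by auto
qed

theorem lemma3p1:
  fixes P :: "real poly" and n m :: nat and a b :: real
  assumes "good P n a b"
    and "m \<ge> n + 1"
    and "\<forall>x\<in>{a..b}. poly P x - x ^ m > 0"
    and "\<forall>m'. n + 1 \<le> m' \<and> m' < m \<longrightarrow> \<not> (\<forall>x\<in>{a..b}. poly P x - x ^ m' > 0)"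
  shows "good (P - monom 1 m) m a b"
proof -
  have "n < m" using assms(2) by simp
  have eval: "poly (P - monom 1 m) x = poly P x - x ^ m" for x
    by (simp add: poly_monom)
  from assms(1) have P: "P \<in> B n" "1/2 < a" "a < b" "b < 1"
    unfolding good_def by auto
  then have "P - monom 1 m \<in> B m"
    using minus_monom_in_B \<open>n < m\<close> by blast
  with P show ?thesis
    unfolding good_def eval
    using good_endpoints_minus_power[OF assms(1) \<open>n < m\<close>]
      good_crossing_minus_power[OF assms(1) \<open>n < m\<close> assms(4)] assms(3)
    by blast
qed

end
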